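(* Let $\mathcal M=(\mathbf M^{(\lambda)})_{\lambda>0}$, $\mathbf M^{(\lambda)}=(M^{(\lambda)}_p)_{p\in\mathbb N_0}$, be a weight matrix in dimension $d=1$ such that for every $\lambda>0$: $(M^{(\lambda)}_p)^2\le M^{(\lambda)}_{p-1}M^{(\lambda)}_{p+1}$ for all $p\in\mathbb N$, and $\lim_{p\to\infty}(M^{(\lambda)}_p)^{1/p}=+\infty$. Assume moreover that $\mu^{(\lambda)}_p:=M^{(\lambda)}_p/M^{(\lambda)}_{p-1}$ ($p\in\mathbb N$), $\mu^{(\lambda)}_0:=1$, satisfy $\mu^{(\lambda)}_p\le\mu^{(\kappa)}_p$ for all $p$ whenever $0<\lambda\le\kappa$. Then $\Lambda_{(\mathcal M)}$ is nuclear if and only if for every $\lambda>0$ there exist $0<\kappa\le\lambda$ and $A\ge1$ with $M^{(\kappa)}_{p+1}\le A^{p+1}M^{(\lambda)}_p$ for all $p\in\mathbb N_0$.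
   Context: A weight matrix (here $d=1$) is a family $(\mathbf M^{(\lambda)})_{\lambda>0}$ of sequences of positive reals $(M^{(\lambda)}_p)_{p\in\mathbb N_0}$ with $M^{(\lambda)}_0=1$ and $M^{(\lambda)}_p\le M^{(\kappa)}_p$ for all $p$ whenever $0<\lambda\le\kappa$. The associated function of $\mathbf M=(M_p)$ is $\omega_{\mathbf M}(t)=\sup_{p\in\mathbb N_0}\log\frac{|t|^p}{M_p}$ (with $0^0=1$). With $\|\mathbf c\|_{\mathbf M,h}:=\sup_{k\in\mathbb N_0}|c_k|e^{\omega_{\mathbf M}(k^{1/2}/h)}$, $\Lambda_{(\mathcal M)}$ is the space of sequences $\mathbf c=(c_k)_{k\in\mathbb N_0}$ with $\|\mathbf c\|_{\mathbf M^{(\lambda)},h}<\infty$ for all $\lambda,h>0$, with the Fréchet topology given by the norms $\|\cdot\|_{\mathbf M^{(1/j)},1/j}$, $j\in\mathbb N$. *)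

theory Defs
  imports "HOL-Analysis.Analysis"
begin

definition assoc_fun :: "(nat \<Rightarrow> real) \<Rightarrow> real \<Rightarrow> real" where
  "assoc_fun M t = (SUP p. ln (\<bar>t\<bar> ^ p / M p))"

definition seq_norm :: "(nat \<Rightarrow> real) \<Rightarrow> real \<Rightarrow> (nat \<Rightarrow> complex) \<Rightarrow> real" where
  "seq_norm M h c = (SUP k. cmod (c k) * exp (assoc_fun M (sqrt (real k) / h)))"

definition Lambda_Beur :: "(real \<Rightarrow> nat \<Rightarrow> real) \<Rightarrow> (nat \<Rightarrow> complex) set" where
  "Lambda_Beur MM = {c. \<forall>lam>0. \<forall>h>0.
      bdd_above (range (\<lambda>k. cmod (c k) * exp (assoc_fun (MM lam) (sqrt (real k) / h))))}"

text \<open>The fundamental system of norms  ||.||_{M^(1/j),1/j},  j = 1,2,...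
  (indexed here by j = Suc i).\<close>
definition Lambda_norms :: "(real \<Rightarrow> nat \<Rightarrow> real) \<Rightarrow> nat \<Rightarrow> (nat \<Rightarrow> complex) \<Rightarrow> real" where
  "Lambda_norms MM i c = seq_norm (MM (1 / real (Suc i))) (1 / real (Suc i)) c"

text \<open>Nuclearity of a (metrizable) locally convex space given by a vector space V
  and a countable fundamental system of seminorms p_0, p_1, ...: for every j there is l
  such that the canonical map E_l -> E_j is quasi-nuclear, i.e. there are linear
  functionals f_n on V with |f_n x| <= c_n p_l(x), sum c_n < infinity, and
  p_j(x) <= sum_n |f_n x| (Pietsch).\<close>
definition nuclear_lcs :: "(nat \<Rightarrow> complex) set \<Rightarrow> (nat \<Rightarrow> (nat \<Rightarrow> complex) \<Rightarrow> real) \<Rightarrow> bool" where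
  "nuclear_lcs V p \<longleftrightarrow> (\<forall>j. \<exists>l. \<exists>f :: nat \<Rightarrow> (nat \<Rightarrow> complex) \<Rightarrow> complex. \<exists>c :: nat \<Rightarrow> real.
      (\<forall>n. \<forall>x\<in>V. \<forall>y\<in>V. f n (\<lambda>k. x k + y k) = f n x + f n y) \<and>
      (\<forall>n. \<forall>a. \<forall>x\<in>V. f n (\<lambda>k. a * x k) = a * f n x) \<and>
      (\<forall>n. c n \<ge> 0) \<and> summable c \<and>
      (\<forall>n. \<forall>x\<in>V. cmod (f n x) \<le> c n * p l x) \<and>
      (\<forall>x\<in>V. p j x \<le> (\<Sum>n. cmod (f n x))))"

end

theory Submission
  imports Defs
begin

text \<open>
  With the weights \<open>a i k = exp (\<omega>\<^sub>i (i \<surd>k))\<close>, where \<open>\<omega>\<^sub>i\<close> is the associated function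
  of \<open>M\<^sup>(\<^sup>1\<^sup>/\<^sup>i\<^sup>)\<close>, the space \<open>\<Lambda>\<close> is a Koethe echelon space of sup type, so by the
  Grothendieck-Pietsch criterion it is nuclear iff for every \<open>j\<close> some \<open>l\<close> makes
  \<open>\<Sum>\<^sub>k a j k / a l k\<close> finite.

  Up to constants, the shift condition \<open>M\<^sup>(\<^sup>\<kappa>\<^sup>)\<^sub>p\<^sub>+\<^sub>1 \<le> A\<^sup>p\<^sup>+\<^sup>1 M\<^sup>(\<^sup>\<lambda>\<^sup>)\<^sub>p\<close> is equivalent to
  \<open>\<omega>\<^sub>\<lambda> t + ln t \<le> \<omega>\<^sub>\<kappa> (A t)\<close>: one direction holds termwise in the supremum defining
  \<open>\<omega>\<close>; for the other, evaluate \<open>\<omega>\<^sub>\<kappa>\<close> at the quotient \<open>M\<^sup>(\<^sup>\<kappa>\<^sup>)\<^sub>p\<^sub>+\<^sub>1 / M\<^sup>(\<^sup>\<kappa>\<^sup>)\<^sub>p\<close>, where by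
  log-convexity the supremum is attained at the index \<open>p + 1\<close>. Iterating the shift four
  times gives \<open>a j k / a l k \<le> k\<^sup>-\<^sup>2\<close>; conversely, summing the ratios over the roughly
  \<open>s\<^sup>2\<close> indices with \<open>s \<le> \<surd>k \<le> 2 s\<close> recovers the factor \<open>s\<close>.
\<close>

section \<open>The associated function of a weight sequence\<close>

lemma bdd_above_range_if_eventually_le:
  fixes f :: "nat \<Rightarrow> real"
  assumes "eventually (\<lambda>n. f n \<le> c) sequentially"
  shows "bdd_above (range f)"
proof -
  obtain N where "\<And>n. n \<ge> N \<Longrightarrow> f n \<le> c"
    using assms by (auto simp: eventually_sequentially)
  then have "f n \<in> f ` {..<N} \<union> {..c}" for n
    by (cases "n < N") auto
  then have "range f \<subseteq> f ` {..<N} \<union> {..c}"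
    by blast
  then show ?thesis
    by (rule bdd_above_mono[rotated]) (simp add: bdd_above_Un)
qed

lemma ln_le_zero:
  fixes x :: real
  assumes "0 \<le> x" "x \<le> 1"
  shows "ln x \<le> 0"
  using assms by (cases "x = 0") auto

lemma assoc_fun_least:
  assumes "\<And>p. ln (\<bar>t\<bar> ^ p / M p) \<le> C"
  shows "assoc_fun M t \<le> C"
  unfolding assoc_fun_def by (rule cSUP_least) (auto intro: assms)

locale weight_sequence =
  fixes M :: "nat \<Rightarrow> real"
  assumes pos: "M p > 0"
    and zero: "M 0 = 1"
    and root_at_top: "filterlim (\<lambda>p. M p powr (1 / real p)) at_top sequentially"
begin

lemma power_div_le_one_eventually: "eventually (\<lambda>p. \<bar>t\<bar> ^ p / M p \<le> 1) sequentially"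
proof -
  have "eventually (\<lambda>p. \<bar>t\<bar> + 1 \<le> M p powr (1 / real p)) sequentially"
    using root_at_top by (simp add: filterlim_at_top)
  then show ?thesis
    using eventually_gt_at_top[of 0]
  proof eventually_elim
    case (elim p)
    have "\<bar>t\<bar> ^ p \<le> (M p powr (1 / real p)) ^ p"
      using elim(1) by (intro power_mono) auto
    also have "\<dots> = (M p powr (1 / real p)) powr real p"
      using pos[of p] by (simp add: powr_realpow)
    also have "\<dots> = M p"
      using elim(2) pos[of p] by (simp add: powr_powr)
    finally show ?case
      using pos[of p] by simp
  qed
qed

lemma assoc_fun_bdd: "bdd_above (range (\<lambda>p. ln (\<bar>t\<bar> ^ p / M p)))"
proof (rule bdd_above_range_if_eventually_le)
  show "eventually (\<lambda>p. ln (\<bar>t\<bar> ^ p / M p) \<le> 0) sequentially"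
    using power_div_le_one_eventually[of t]
  proof eventually_elim
    case (elim p)
    then show ?case
      using pos[of p] by (intro ln_le_zero) auto
  qed
qed

lemma ln_le_assoc_fun: "ln (\<bar>t\<bar> ^ p / M p) \<le> assoc_fun M t"
  unfolding assoc_fun_def by (rule cSUP_upper[OF _ assoc_fun_bdd]) simp

lemma assoc_fun_nonneg: "0 \<le> assoc_fun M t"
  using ln_le_assoc_fun[of t 0] by (simp add: zero)

lemma power_div_le_exp_assoc_fun: "\<bar>t\<bar> ^ p / M p \<le> exp (assoc_fun M t)"
proof (cases "\<bar>t\<bar> ^ p / M p = 0")
  case False
  moreover have "0 \<le> \<bar>t\<bar> ^ p / M p"
    using pos[of p] by simp
  ultimately have "\<bar>t\<bar> ^ p / M p = exp (ln (\<bar>t\<bar> ^ p / M p))"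
    by (intro exp_ln[symmetric]) linarith
  also have "\<dots> \<le> exp (assoc_fun M t)"
    using ln_le_assoc_fun by simp
  finally show ?thesis .
next
  case True
  then show ?thesis
    by (simp only:) simp
qed

lemma ln_le_assoc_fun_if_le:
  assumes "0 \<le> x" "x \<le> \<bar>t\<bar> ^ p / M p"
  shows "ln x \<le> assoc_fun M t"
proof (cases "x = 0")
  case False
  then have "0 < x"
    using assms(1) by linarith
  then have "ln x \<le> ln (\<bar>t\<bar> ^ p / M p)"
    using assms(2) by (subst ln_le_cancel_iff) auto
  then show ?thesis
    using ln_le_assoc_fun[of t p] by linarith
qed (simp add: assoc_fun_nonneg)

lemma assoc_fun_mono:
  assumes "0 \<le> s" "s \<le> t"
  shows "assoc_fun M s \<le> assoc_fun M t"
proof (rule assoc_fun_least, rule ln_le_assoc_fun_if_le)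
  show "\<bar>s\<bar> ^ p / M p \<le> \<bar>t\<bar> ^ p / M p" for p
    using assms pos[of p] by (intro divide_right_mono power_mono) auto
qed (simp add: pos less_imp_le)

lemma assoc_fun_antimono:
  assumes "\<And>p. M p \<le> N p"
  shows "assoc_fun N t \<le> assoc_fun M t"
proof (rule assoc_fun_least, rule ln_le_assoc_fun_if_le)
  show "\<bar>t\<bar> ^ p / N p \<le> \<bar>t\<bar> ^ p / M p" for p
    using assms[of p] pos[of p] by (intro divide_left_mono) auto
  show "0 \<le> \<bar>t\<bar> ^ p / N p" for p
    using assms[of p] pos[of p] by simp
qed

lemma assoc_fun_add_ln_le:
  assumes N: "weight_sequence N" and A: "A > 0" and t: "t > 0"
    and shift: "\<And>p. N (p + 1) \<le> A ^ (p + 1) * M p"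
  shows "assoc_fun M t + ln t \<le> assoc_fun N (A * t)"
proof -
  interpret N: weight_sequence N by (fact N)
  have "assoc_fun M t \<le> assoc_fun N (A * t) - ln t"
  proof (rule assoc_fun_least)
    fix p
    have "t ^ (p + 1) / M p = (A * t) ^ (p + 1) / (A ^ (p + 1) * M p)"
      using A by (simp add: power_mult_distrib)
    also have "\<dots> \<le> (A * t) ^ (p + 1) / N (p + 1)"
      using shift[of p] A t N.pos[of "p + 1"] by (intro divide_left_mono) auto
    finally have "t ^ (p + 1) / M p \<le> (A * t) ^ (p + 1) / N (p + 1)" .
    then have "ln (t ^ (p + 1) / M p) \<le> ln ((A * t) ^ (p + 1) / N (p + 1))"
      using A t pos[of p] N.pos[of "p + 1"] by simp
    also have "\<dots> \<le> assoc_fun N (A * t)"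
      using N.ln_le_assoc_fun[of "A * t" "p + 1"] A t by simp
    finally show "ln (\<bar>t\<bar> ^ p / M p) \<le> assoc_fun N (A * t) - ln t"
      using t pos[of p] by (simp add: ln_div ln_mult)
  qed
  then show ?thesis
    by simp
qed

end

locale log_convex_weight_sequence = weight_sequence +
  assumes log_convex: "p \<ge> 1 \<Longrightarrow> (M p)\<^sup>2 \<le> M (p - 1) * M (p + 1)"
begin

lemma incseq_quotient: "incseq (\<lambda>p. M (Suc p) / M p)"
proof (rule incseq_SucI)
  fix p
  have "M (Suc p) * M (Suc p) \<le> M p * M (Suc (Suc p))"
    using log_convex[of "Suc p"] by (simp add: power2_eq_square)
  then show "M (Suc p) / M p \<le> M (Suc (Suc p)) / M (Suc p)"
    using pos[of p] pos[of "Suc p"] by (simp add: divide_le_eq le_divide_eq mult.commute)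
qed

text \<open>By log-convexity, \<open>n \<mapsto> t\<^sup>n / M n\<close> increases up to \<open>n = q + 1\<close> and decreases
  afterwards.\<close>
lemma power_div_le_at_quotient:
  assumes t: "t = M (Suc q) / M q"
  shows "t ^ n / M n \<le> t ^ Suc q / M (Suc q)"
proof -
  define g where "g n = t ^ n / M n" for n
  have t_pos: "t > 0"
    using t pos[of q] pos[of "Suc q"] by simp
  have g_eq: "g m = t ^ Suc m / (t * M m)" for m
    using t_pos by (simp add: g_def)
  have up: "g m \<le> g (Suc m)" if "m \<le> q" for m
  proof -
    have "M (Suc m) \<le> t * M m"
      using incseqD[OF incseq_quotient that] t pos[of m] by (simp add: divide_le_eq)
    then have "t ^ Suc m / (t * M m) \<le> t ^ Suc m / M (Suc m)"
      using t_pos pos[of "Suc m"] by (intro divide_left_mono) auto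
    then show ?thesis
      by (simp only: g_eq[of m] g_def[of "Suc m"])
  qed
  have down: "g (Suc m) \<le> g m" if "q \<le> m" for m
  proof -
    have "t * M m \<le> M (Suc m)"
      using incseqD[OF incseq_quotient that] t pos[of m] by (simp add: le_divide_eq)
    then have "t ^ Suc m / M (Suc m) \<le> t ^ Suc m / (t * M m)"
      using t_pos pos[of m] pos[of "Suc m"] by (intro divide_left_mono) auto
    then show ?thesis
      by (simp only: g_eq[of m] g_def[of "Suc m"])
  qed
  show ?thesis
  proof (cases "n \<le> Suc q")
    case True
    then show ?thesis
      unfolding g_def[symmetric]
    proof (induction rule: dec_induct)
      case (step m)
      then show ?case
        using up[of m] by simp
    qed simp
  next
    case False
    then have "Suc q \<le> n"
      by simp
    then show ?thesis
      unfolding g_def[symmetric]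
    proof (induction rule: dec_induct)
      case (step m)
      then show ?case
        using down[of m] by simp
    qed simp
  qed
qed

lemma exp_assoc_fun_at_quotient:
  assumes t: "t = M (Suc q) / M q"
  shows "exp (assoc_fun M t) \<le> t ^ Suc q / M (Suc q)"
proof -
  have t_pos: "t > 0"
    using t pos[of q] pos[of "Suc q"] by simp
  have "assoc_fun M t \<le> ln (t ^ Suc q / M (Suc q))"
  proof (rule assoc_fun_least)
    fix n
    show "ln (\<bar>t\<bar> ^ n / M n) \<le> ln (t ^ Suc q / M (Suc q))"
      using power_div_le_at_quotient[OF t, of n] t_pos pos[of n] pos[of "Suc q"] by simp
  qed
  then show ?thesis
    using t_pos pos[of "Suc q"] by (simp add: ln_ge_iff)
qed

lemma shift_le_if_assoc_fun_le:
  assumes L: "weight_sequence L" and C: "C \<ge> 1" and B: "B > 0"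
    and bound: "\<And>s. s > 0 \<Longrightarrow> s * exp (assoc_fun L s) \<le> C * exp (assoc_fun M (B * s))"
  shows "M (p + 1) \<le> (C * B) ^ (p + 1) * L p"
proof -
  interpret L: weight_sequence L by (fact L)
  define t where "t = M (Suc p) / M p"
  define s where "s = t / B"
  have t_pos: "t > 0"
    using pos[of p] pos[of "Suc p"] by (simp add: t_def)
  then have s_pos: "s > 0" and t_eq: "t = B * s"
    using B by (simp_all add: s_def)
  have "s * (s ^ p / L p) \<le> s * exp (assoc_fun L s)"
    using L.power_div_le_exp_assoc_fun[of s p] s_pos by (intro mult_left_mono) auto
  also have "\<dots> \<le> C * exp (assoc_fun M t)"
    using bound[OF s_pos] t_eq by simp
  also have "\<dots> \<le> C * (t ^ Suc p / M (Suc p))"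
    using exp_assoc_fun_at_quotient[OF t_def] C by (intro mult_left_mono) auto
  finally have "s ^ Suc p / L p \<le> C * (B ^ Suc p * s ^ Suc p / M (Suc p))"
    by (simp add: t_eq power_mult_distrib mult_ac)
  then have "M (Suc p) \<le> C * B ^ Suc p * L p"
    using s_pos pos[of "Suc p"] L.pos[of p] by (simp add: field_simps)
  also have "\<dots> \<le> C ^ Suc p * B ^ Suc p * L p"
    using C B L.pos[of p] by (intro mult_right_mono power_increasing[of 1 "Suc p" C, simplified]) auto
  finally show ?thesis
    by (simp add: power_mult_distrib mult_ac)
qed

end

section \<open>Koethe sequence spaces of sup type\<close>

definition unit_seq :: "nat \<Rightarrow> nat \<Rightarrow> complex" where
  "unit_seq k i = of_bool (i = k)"

lemma sgn_cnj_mult_self: "sgn (cnj z) * z = of_real (cmod z)"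
proof (cases "z = 0")
  case False
  have "sgn (cnj z) * z = cnj z * z / of_real (cmod z)"
    by (simp add: sgn_div_norm scaleR_conv_of_real divide_inverse mult_ac)
  also have "\<dots> = of_real (cmod z)"
    using False by (simp add: complex_norm_square[symmetric] power2_eq_square mult.commute)
  finally show ?thesis .
qed simp

locale sup_koethe_space =
  fixes V :: "(nat \<Rightarrow> complex) set"
    and a :: "nat \<Rightarrow> nat \<Rightarrow> real"
    and p :: "nat \<Rightarrow> (nat \<Rightarrow> complex) \<Rightarrow> real"
  assumes weight_pos: "a i k > 0"
    and finite_support_in: "(\<And>k. k \<ge> K \<Longrightarrow> x k = 0) \<Longrightarrow> x \<in> V"
    and bdd_weighted: "x \<in> V \<Longrightarrow> bdd_above (range (\<lambda>k. cmod (x k) * a i k))"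
    and seminorm_eq: "p i x = (SUP k. cmod (x k) * a i k)"
begin

lemma weighted_le_seminorm: "x \<in> V \<Longrightarrow> cmod (x k) * a i k \<le> p i x"
  unfolding seminorm_eq by (rule cSUP_upper[OF _ bdd_weighted]) auto

lemma summable_imp_nuclear:
  assumes summable: "\<And>j. \<exists>l. summable (\<lambda>k. a j k / a l k)"
  shows "nuclear_lcs V p"
  unfolding nuclear_lcs_def
proof
  fix j
  obtain l where l: "summable (\<lambda>k. a j k / a l k)"
    using summable by blast
  define f where "f n x = x n * complex_of_real (a j n)" for n and x :: "nat \<Rightarrow> complex"
  define c where "c = (\<lambda>k. a j k / a l k)"
  have f_le: "cmod (f n x) \<le> c n * p l x" if "x \<in> V" for n x
  proof -
    have "cmod (f n x) = c n * (cmod (x n) * a l n)"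
      using weight_pos[of j n] weight_pos[of l n] by (simp add: f_def c_def norm_mult)
    also have "\<dots> \<le> c n * p l x"
      using weighted_le_seminorm[OF that] weight_pos[of j n] weight_pos[of l n]
      by (intro mult_left_mono) (auto simp: c_def)
    finally show ?thesis .
  qed
  have f_summable: "summable (\<lambda>n. cmod (f n x))" if "x \<in> V" for x
  proof (rule summable_comparison_test')
    show "summable (\<lambda>n. c n * p l x)"
      using summable_mult2[OF l] by (simp add: c_def)
    show "norm (cmod (f n x)) \<le> c n * p l x" for n
      using f_le[OF that] by simp
  qed
  have "p j x \<le> (\<Sum>n. cmod (f n x))" if "x \<in> V" for x
    unfolding seminorm_eq
  proof (rule cSUP_least)
    fix k
    have "cmod (x k) * a j k = (\<Sum>n\<in>{k}. cmod (f n x))"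
      using weight_pos[of j k] by (simp add: f_def norm_mult)
    also have "\<dots> \<le> (\<Sum>n. cmod (f n x))"
      by (rule sum_le_suminf[OF f_summable[OF that]]) auto
    finally show "cmod (x k) * a j k \<le> (\<Sum>n. cmod (f n x))" .
  qed simp
  moreover have "summable c" "\<And>n. c n \<ge> 0"
    using l weight_pos[of j] weight_pos[of l] by (simp_all add: c_def less_imp_le)
  ultimately show "\<exists>l f c. (\<forall>n. \<forall>x\<in>V. \<forall>y\<in>V. f n (\<lambda>k. x k + y k) = f n x + f n y) \<and>
      (\<forall>n a. \<forall>x\<in>V. f n (\<lambda>k. a * x k) = a * f n x) \<and> (\<forall>n. 0 \<le> c n) \<and> summable c \<and>
      (\<forall>n. \<forall>x\<in>V. cmod (f n x) \<le> c n * p l x) \<and> (\<forall>x\<in>V. p j x \<le> (\<Sum>n. cmod (f n x)))"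
    using f_le by (intro exI[of _ l] exI[of _ f] exI[of _ c]) (auto simp: f_def algebra_simps)
qed

lemma linear_on_finite_sum:
  assumes add: "\<forall>x\<in>V. \<forall>y\<in>V. f (\<lambda>k. x k + y k) = f x + f y"
    and hom: "\<forall>c. \<forall>x\<in>V. f (\<lambda>k. c * x k) = c * f x"
  shows "f (\<lambda>i. \<Sum>k<K. \<alpha> k * unit_seq k i) = (\<Sum>k<K. \<alpha> k * f (unit_seq k))"
proof (induction K)
  case 0
  have "unit_seq 0 \<in> V"
    by (rule finite_support_in[of 1]) (simp add: unit_seq_def)
  then have "f (\<lambda>k. 0 * unit_seq 0 k) = 0 * f (unit_seq 0)"
    using hom by blast
  then show ?case
    by simp
next
  case (Suc K)
  have "(\<lambda>i. \<Sum>k<K. \<alpha> k * unit_seq k i) \<in> V" "(\<lambda>i. \<alpha> K * unit_seq K i) \<in> V"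
    "unit_seq K \<in> V"
    by (auto intro!: finite_support_in[of "Suc K"] simp: unit_seq_def)
  then show ?case
    using add hom Suc.IH by simp
qed

text \<open>The test vector with entries \<open>sgn (cnj (f e\<^sub>k)) / a l k\<close>, \<open>k < K\<close>, has \<open>p l\<close>-seminorm
  at most one and is mapped by \<open>f\<close> to the real number on the left.\<close>
lemma sum_norm_unit_seq_le:
  assumes add: "\<forall>x\<in>V. \<forall>y\<in>V. f (\<lambda>k. x k + y k) = f x + f y"
    and hom: "\<forall>c. \<forall>x\<in>V. f (\<lambda>k. c * x k) = c * f x"
    and bound: "\<forall>x\<in>V. cmod (f x) \<le> C * p l x" and C: "C \<ge> 0"
  shows "(\<Sum>k<K. cmod (f (unit_seq k)) / a l k) \<le> C"
proof -
  define \<alpha> where "\<alpha> k = sgn (cnj (f (unit_seq k))) / of_real (a l k)" for k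
  define x where "x i = (\<Sum>k<K. \<alpha> k * unit_seq k i)" for i
  have x_V: "x \<in> V"
    by (rule finite_support_in[of K]) (simp add: x_def unit_seq_def)
  have x_eq: "x i = (if i < K then \<alpha> i else 0)" for i
    by (simp add: x_def unit_seq_def of_bool_def if_distrib sum.delta' cong: if_cong)
  have "f x = (\<Sum>k<K. \<alpha> k * f (unit_seq k))"
    unfolding x_def by (rule linear_on_finite_sum[OF add hom])
  also have "\<dots> = of_real (\<Sum>k<K. cmod (f (unit_seq k)) / a l k)"
    by (simp add: \<alpha>_def sgn_cnj_mult_self)
  finally have fx: "f x = of_real (\<Sum>k<K. cmod (f (unit_seq k)) / a l k)" .
  have "0 \<le> (\<Sum>k<K. cmod (f (unit_seq k)) / a l k)"
    using weight_pos by (simp add: sum_nonneg less_imp_le)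
  then have "(\<Sum>k<K. cmod (f (unit_seq k)) / a l k) = cmod (f x)"
    unfolding fx norm_of_real by (rule abs_of_nonneg[symmetric])
  also have "\<dots> \<le> C * p l x"
    using bound x_V by blast
  also have "p l x \<le> 1"
    unfolding seminorm_eq
  proof (rule cSUP_least)
    fix i
    have "cmod (x i) \<le> 1 / a l i"
      using weight_pos[of l i] by (simp add: x_eq \<alpha>_def norm_divide norm_sgn)
    then show "cmod (x i) * a l i \<le> 1"
      using weight_pos[of l i] by (simp add: field_simps)
  qed simp
  then have "C * p l x \<le> C"
    using C by (simp add: mult_left_le)
  finally show ?thesis .
qed

lemma nuclear_imp_summable:
  assumes "nuclear_lcs V p"
  shows "\<exists>l. summable (\<lambda>k. a j k / a l k)"
proof -
  obtain l and f :: "nat \<Rightarrow> (nat \<Rightarrow> complex) \<Rightarrow> complex" and c where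
    add: "\<forall>n. \<forall>x\<in>V. \<forall>y\<in>V. f n (\<lambda>k. x k + y k) = f n x + f n y"
    and hom: "\<forall>n. \<forall>c. \<forall>x\<in>V. f n (\<lambda>k. c * x k) = c * f n x"
    and c_nonneg: "\<forall>n. c n \<ge> 0" and c_summable: "summable c"
    and f_le: "\<forall>n. \<forall>x\<in>V. cmod (f n x) \<le> c n * p l x"
    and p_le: "\<forall>x\<in>V. p j x \<le> (\<Sum>n. cmod (f n x))"
    using assms[unfolded nuclear_lcs_def, THEN spec[of _ j]] by (elim exE conjE) (rule that)
  have unit_V: "unit_seq k \<in> V" for k
    by (rule finite_support_in[of "Suc k"]) (simp add: unit_seq_def)
  have f_summable: "summable (\<lambda>n. cmod (f n (unit_seq k)))" for k
  proof (rule summable_comparison_test')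
    show "summable (\<lambda>n. c n * p l (unit_seq k))"
      using c_summable by (rule summable_mult2)
    show "norm (cmod (f n (unit_seq k))) \<le> c n * p l (unit_seq k)" for n
      using f_le unit_V by simp
  qed
  have "(\<Sum>k<K. a j k / a l k) \<le> suminf c" for K
  proof -
    have "a j k \<le> (\<Sum>n. cmod (f n (unit_seq k)))" for k
      using weighted_le_seminorm[of "unit_seq k" k j] p_le unit_V[of k]
      by (force simp: unit_seq_def)
    then have "a j k / a l k \<le> (\<Sum>n. cmod (f n (unit_seq k)) / a l k)" for k
      using weight_pos[of l k] by (simp add: suminf_divide[OF f_summable] divide_right_mono)
    then have "(\<Sum>k<K. a j k / a l k) \<le> (\<Sum>k<K. \<Sum>n. cmod (f n (unit_seq k)) / a l k)"
      by (rule sum_mono)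
    also have "\<dots> = (\<Sum>n. \<Sum>k<K. cmod (f n (unit_seq k)) / a l k)"
      by (rule suminf_sum[symmetric]) (rule summable_divide[OF f_summable])
    also have "\<dots> \<le> suminf c"
    proof (rule suminf_le)
      show "summable (\<lambda>n. \<Sum>k<K. cmod (f n (unit_seq k)) / a l k)"
        by (intro summable_sum summable_divide f_summable)
      show "(\<Sum>k<K. cmod (f n (unit_seq k)) / a l k) \<le> c n" for n
        using add hom f_le c_nonneg by (intro sum_norm_unit_seq_le) auto
    qed (rule c_summable)
    finally show ?thesis .
  qed
  then show ?thesis
    using weight_pos by (intro exI summableI_nonneg_bounded) (auto simp: less_imp_le)
qed

lemma nuclear_iff_summable: "nuclear_lcs V p \<longleftrightarrow> (\<forall>j. \<exists>l. summable (\<lambda>k. a j k / a l k))"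
  using nuclear_imp_summable summable_imp_nuclear by metis

end

section \<open>Weight matrices\<close>

definition beurling_derivation_closed :: "(real \<Rightarrow> nat \<Rightarrow> real) \<Rightarrow> bool" where
  "beurling_derivation_closed MM \<longleftrightarrow> (\<forall>lam>0. \<exists>\<kappa>. 0 < \<kappa> \<and> \<kappa> \<le> lam \<and>
     (\<exists>A\<ge>1. \<forall>p. MM \<kappa> (p + 1) \<le> A ^ (p + 1) * MM lam p))"

definition Lambda_weight :: "(real \<Rightarrow> nat \<Rightarrow> real) \<Rightarrow> nat \<Rightarrow> nat \<Rightarrow> real" where
  "Lambda_weight MM i k =
     exp (assoc_fun (MM (1 / real (Suc i))) (sqrt (real k) / (1 / real (Suc i))))"

lemma Lambda_weight_eq:
  "Lambda_weight MM i k = exp (assoc_fun (MM (1 / real (Suc i))) (sqrt (real k) * real (Suc i)))"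
  by (simp add: Lambda_weight_def)

lemma sup_koethe_space_Lambda:
  "sup_koethe_space (Lambda_Beur MM) (Lambda_weight MM) (Lambda_norms MM)"
proof
  show "0 < Lambda_weight MM i k" for i k
    by (simp add: Lambda_weight_def)
  show "x \<in> Lambda_Beur MM" if "\<And>k. K \<le> k \<Longrightarrow> x k = 0" for K x
    unfolding Lambda_Beur_def
  proof (intro CollectI allI impI bdd_above_range_if_eventually_le)
    show "eventually (\<lambda>k. cmod (x k) * exp (assoc_fun (MM lam) (sqrt (real k) / h)) \<le> 0)
      sequentially" for lam h
      using that by (auto simp: eventually_sequentially intro!: exI[of _ K])
  qed
  show "bdd_above (range (\<lambda>k. cmod (x k) * Lambda_weight MM i k))"
    if "x \<in> Lambda_Beur MM" for x i
    using that[unfolded Lambda_Beur_def, simplified, rule_format,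
        of "1 / real (Suc i)" "1 / real (Suc i)"]
    unfolding Lambda_weight_def by simp
  show "Lambda_norms MM i x = (SUP k. cmod (x k) * Lambda_weight MM i k)" for i x
    by (simp add: Lambda_norms_def seq_norm_def Lambda_weight_def)
qed

locale weight_matrix =
  fixes MM :: "real \<Rightarrow> nat \<Rightarrow> real"
  assumes log_convex_weight_sequence_MM: "lam > 0 \<Longrightarrow> log_convex_weight_sequence (MM lam)"
    and mono: "0 < lam \<Longrightarrow> lam \<le> \<kappa> \<Longrightarrow> MM lam p \<le> MM \<kappa> p"
begin

lemma weight_sequence_MM: "lam > 0 \<Longrightarrow> weight_sequence (MM lam)"
  using log_convex_weight_sequence_MM log_convex_weight_sequence_def by blast

lemma assoc_fun_mono: "lam > 0 \<Longrightarrow> 0 \<le> s \<Longrightarrow> s \<le> t \<Longrightarrow> assoc_fun (MM lam) s \<le> assoc_fun (MM lam) t"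
  using weight_sequence_MM weight_sequence.assoc_fun_mono by blast

lemma assoc_fun_antimono: "0 < lam \<Longrightarrow> lam \<le> \<kappa> \<Longrightarrow> assoc_fun (MM \<kappa>) t \<le> assoc_fun (MM lam) t"
  using weight_sequence_MM weight_sequence.assoc_fun_antimono mono by blast

lemma assoc_fun_add_mult_ln_le:
  assumes closed: "beurling_derivation_closed MM" and lam: "lam > 0"
  shows "\<exists>\<kappa> A. 0 < \<kappa> \<and> \<kappa> \<le> lam \<and> A \<ge> 1 \<and>
    (\<forall>t\<ge>1. assoc_fun (MM lam) t + real m * ln t \<le> assoc_fun (MM \<kappa>) (A * t))"
proof (induction m)
  case 0
  show ?case
    using lam by (intro exI[of _ lam] exI[of _ 1]) auto
next
  case (Suc m)
  then obtain \<kappa> A where \<kappa>: "0 < \<kappa>" "\<kappa> \<le> lam" and A: "A \<ge> 1"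
    and IH: "\<And>t. t \<ge> 1 \<Longrightarrow> assoc_fun (MM lam) t + real m * ln t \<le> assoc_fun (MM \<kappa>) (A * t)"
    by blast
  obtain \<kappa>' A' where \<kappa>': "0 < \<kappa>'" "\<kappa>' \<le> \<kappa>" and A': "A' \<ge> 1"
    and shift: "\<And>p. MM \<kappa>' (p + 1) \<le> A' ^ (p + 1) * MM \<kappa> p"
    using closed \<kappa>(1) unfolding beurling_derivation_closed_def by blast
  have "assoc_fun (MM lam) t + real (Suc m) * ln t \<le> assoc_fun (MM \<kappa>') (A' * A * t)" if t: "t \<ge> 1" for t
  proof -
    have At: "t \<le> A * t"
      using A t by simp
    have "assoc_fun (MM lam) t + real (Suc m) * ln t = (assoc_fun (MM lam) t + real m * ln t) + ln t"
      by (simp add: algebra_simps)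
    also have "\<dots> \<le> assoc_fun (MM \<kappa>) (A * t) + ln (A * t)"
      using IH[OF t] At t by (intro add_mono) auto
    also have "\<dots> \<le> assoc_fun (MM \<kappa>') (A' * (A * t))"
      using weight_sequence.assoc_fun_add_ln_le[OF weight_sequence_MM weight_sequence_MM] \<kappa> \<kappa>' A' shift At t
      by simp
    finally show ?thesis
      by (simp add: mult.assoc)
  qed
  moreover have "1 \<le> A' * A"
    using A A' by (metis mult_mono' mult_1 zero_le_one)
  ultimately show ?case
    using \<kappa> \<kappa>' by (intro exI[of _ \<kappa>'] exI[of _ "A' * A"]) auto
qed

lemma Lambda_weight_ratio_le_inverse_square:
  assumes \<kappa>: "0 < \<kappa>" "1 / real (Suc l) \<le> \<kappa>" and A: "A \<ge> 1" "A * real (Suc j) \<le> real (Suc l)"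
    and shift: "\<And>t. t \<ge> 1 \<Longrightarrow>
      assoc_fun (MM (1 / real (Suc j))) t + 4 * ln t \<le> assoc_fun (MM \<kappa>) (A * t)"
    and n: "n \<ge> 1"
  shows "Lambda_weight MM j n / Lambda_weight MM l n \<le> inverse (real n ^ 2)"
proof -
  define t where "t = sqrt (real n) * real (Suc j)"
  have "1 \<le> sqrt (real n)"
    using n by simp
  moreover have n_le_t: "sqrt (real n) \<le> t"
    unfolding t_def using mult_left_mono[of 1 "real (Suc j)" "sqrt (real n)"] by simp
  ultimately have t: "1 \<le> t"
    by linarith
  have "assoc_fun (MM (1 / real (Suc j))) t + 4 * ln t \<le> assoc_fun (MM \<kappa>) (A * t)"
    using shift[OF t] .
  also have "\<dots> \<le> assoc_fun (MM \<kappa>) (sqrt (real n) * real (Suc l))"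
    using \<kappa> A t mult_left_mono[OF A(2), of "sqrt (real n)"]
    by (intro assoc_fun_mono) (auto simp: t_def mult_ac)
  also have "\<dots> \<le> assoc_fun (MM (1 / real (Suc l))) (sqrt (real n) * real (Suc l))"
    using \<kappa> by (intro assoc_fun_antimono) auto
  finally have bound: "assoc_fun (MM (1 / real (Suc j))) t + 4 * ln t
      \<le> assoc_fun (MM (1 / real (Suc l))) (sqrt (real n) * real (Suc l))" .
  have "ln (real n) = 2 * ln (sqrt (real n))"
    using n by (simp add: ln_sqrt)
  moreover have "ln (sqrt (real n)) \<le> ln t"
    using n_le_t n t by (subst ln_le_cancel_iff) auto
  ultimately have "assoc_fun (MM (1 / real (Suc j))) t
      - assoc_fun (MM (1 / real (Suc l))) (sqrt (real n) * real (Suc l)) \<le> - (2 * ln (real n))"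
    using bound by linarith
  then have "Lambda_weight MM j n / Lambda_weight MM l n \<le> exp (- (2 * ln (real n)))"
    by (simp add: Lambda_weight_eq t_def exp_diff[symmetric])
  also have "\<dots> = inverse (real n ^ 2)"
    using n exp_of_nat_mult[of 2 "ln (real n)"] by (simp add: exp_minus)
  finally show ?thesis .
qed

lemma derivation_closed_imp_summable:
  assumes closed: "beurling_derivation_closed MM"
  shows "\<exists>l. summable (\<lambda>k. Lambda_weight MM j k / Lambda_weight MM l k)"
proof -
  obtain \<kappa> A where \<kappa>: "0 < \<kappa>" and A: "A \<ge> 1"
    and shift: "\<And>t. t \<ge> 1 \<Longrightarrow>
      assoc_fun (MM (1 / real (Suc j))) t + 4 * ln t \<le> assoc_fun (MM \<kappa>) (A * t)"
    using assoc_fun_add_mult_ln_le[OF closed, of "1 / real (Suc j)" 4] by auto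
  obtain l :: nat where l: "A * real (Suc j) + 1 / \<kappa> \<le> real l"
    using real_arch_simple by blast
  have "0 < 1 / \<kappa>" "0 \<le> A * real (Suc j)"
    using \<kappa> A by auto
  then have l_A: "A * real (Suc j) \<le> real (Suc l)" and "1 / \<kappa> \<le> real (Suc l)"
    using l by linarith+
  then have l_\<kappa>: "1 / real (Suc l) \<le> \<kappa>"
    using \<kappa> by (simp add: divide_le_eq mult.commute)
  have "eventually (\<lambda>n. norm (Lambda_weight MM j n / Lambda_weight MM l n) \<le> inverse (real n ^ 2))
      sequentially"
    using eventually_ge_at_top[of 1]
  proof eventually_elim
    case (elim n)
    then show ?case
      using Lambda_weight_ratio_le_inverse_square[OF \<kappa> l_\<kappa> A l_A shift elim]
      by (simp add: Lambda_weight_def)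
  qed
  then show ?thesis
    by (intro exI[of _ l] summable_comparison_test_ev[OF _ inverse_power_summable]) auto
qed

lemma Lambda_weight_ratio_ge:
  assumes lam: "0 < lam" "1 / real (Suc j) \<le> lam"
    and s: "1 \<le> s" "s \<le> sqrt (real k)" "sqrt (real k) \<le> 2 * s"
  shows "exp (assoc_fun (MM lam) s) / exp (assoc_fun (MM (1 / real (Suc l))) (2 * real (Suc l) * s))
    \<le> Lambda_weight MM j k / Lambda_weight MM l k"
proof (rule frac_le)
  have "assoc_fun (MM lam) s \<le> assoc_fun (MM (1 / real (Suc j))) s"
    using lam by (intro assoc_fun_antimono) auto
  also have "\<dots> \<le> assoc_fun (MM (1 / real (Suc j))) (sqrt (real k) * real (Suc j))"
    using s mult_left_mono[of 1 "real (Suc j)" "sqrt (real k)"] by (intro assoc_fun_mono) auto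
  finally show "exp (assoc_fun (MM lam) s) \<le> Lambda_weight MM j k"
    by (simp add: Lambda_weight_eq)
  have "assoc_fun (MM (1 / real (Suc l))) (sqrt (real k) * real (Suc l))
      \<le> assoc_fun (MM (1 / real (Suc l))) (2 * real (Suc l) * s)"
    using s mult_right_mono[OF s(3), of "real (Suc l)"] by (intro assoc_fun_mono) (auto simp: mult_ac)
  then show "Lambda_weight MM l k \<le> exp (assoc_fun (MM (1 / real (Suc l))) (2 * real (Suc l) * s))"
    by (simp add: Lambda_weight_eq)
qed (simp_all add: Lambda_weight_def)

text \<open>About \<open>s\<^sup>2\<close> indices \<open>k\<close> have \<open>s \<le> \<surd>k \<le> 2 s\<close>; summing the previous bound over
  them produces the factor \<open>s\<close>, i.e. the shift by one index in \<open>p\<close>.\<close>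
lemma exp_assoc_fun_le_suminf_Lambda_weight_ratio:
  assumes lam: "0 < lam" "1 / real (Suc j) \<le> lam"
    and summable: "summable (\<lambda>k. Lambda_weight MM j k / Lambda_weight MM l k)" and s: "1 \<le> s"
  shows "s * exp (assoc_fun (MM lam) s)
    \<le> (\<Sum>k. Lambda_weight MM j k / Lambda_weight MM l k) *
       exp (assoc_fun (MM (1 / real (Suc l))) (2 * real (Suc l) * s))"
proof -
  define E where "E = exp (assoc_fun (MM lam) s) / exp (assoc_fun (MM (1 / real (Suc l))) (2 * real (Suc l) * s))"
  define K where "K = nat \<lceil>s\<^sup>2\<rceil>"
  have s_le_s2: "s \<le> s\<^sup>2"
    using s by (simp add: power2_eq_square)
  have K_ge: "s\<^sup>2 \<le> real K"
    unfolding K_def by (rule real_nat_ceiling_ge)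
  have K_le: "real K \<le> 2 * s\<^sup>2"
    using s s_le_s2 by (simp add: K_def of_nat_nat) linarith
  have "E \<le> Lambda_weight MM j k / Lambda_weight MM l k" if k: "K \<le> k" "k < 2 * K" for k
    unfolding E_def
  proof (rule Lambda_weight_ratio_ge[OF lam s])
    show "s \<le> sqrt (real k)"
      using K_ge k s by (intro real_le_rsqrt) auto
    show "sqrt (real k) \<le> 2 * s"
      using K_le k s by (intro real_le_lsqrt) (auto simp: power_mult_distrib)
  qed
  then have "real K * E \<le> (\<Sum>k\<in>{K..<2 * K}. Lambda_weight MM j k / Lambda_weight MM l k)"
    using sum_mono[of "{K..<2 * K}" "\<lambda>_. E"] by simp
  also have "\<dots> \<le> (\<Sum>k. Lambda_weight MM j k / Lambda_weight MM l k)"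
    using summable by (rule sum_le_suminf) (auto simp: Lambda_weight_def)
  finally have "s * E \<le> (\<Sum>k. Lambda_weight MM j k / Lambda_weight MM l k)"
    using K_ge s_le_s2 mult_right_mono[of s "real K" E] by (simp add: E_def)
  then show ?thesis
    by (simp add: E_def field_simps)
qed

lemma exp_assoc_fun_le_if_summable:
  assumes lam: "0 < lam" "1 / real (Suc j) \<le> lam"
    and summable: "summable (\<lambda>k. Lambda_weight MM j k / Lambda_weight MM l k)"
    and \<kappa>: "0 < \<kappa>" "\<kappa> \<le> 1 / real (Suc l)"
  obtains C where "C \<ge> 1"
    and "\<And>s. s > 0 \<Longrightarrow>
      s * exp (assoc_fun (MM lam) s) \<le> C * exp (assoc_fun (MM \<kappa>) (2 * real (Suc l) * s))"
proof
  define C where "C = max 1 (max (\<Sum>k. Lambda_weight MM j k / Lambda_weight MM l k)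
    (exp (assoc_fun (MM lam) 1)))"
  show C: "C \<ge> 1"
    by (simp add: C_def)
  fix s :: real
  assume s: "s > 0"
  have "s * exp (assoc_fun (MM lam) s)
      \<le> C * exp (assoc_fun (MM (1 / real (Suc l))) (2 * real (Suc l) * s))"
  proof (cases "s \<ge> 1")
    case True
    then show ?thesis
      using exp_assoc_fun_le_suminf_Lambda_weight_ratio[OF lam summable True]
      by (auto simp: C_def intro: order_trans mult_right_mono)
  next
    case False
    have "s * exp (assoc_fun (MM lam) s) \<le> 1 * exp (assoc_fun (MM lam) 1)"
      using False s assoc_fun_mono[OF lam(1), of s 1] by (intro mult_mono) auto
    also have "\<dots> \<le> C * 1"
      by (simp add: C_def)
    also have "\<dots> \<le> C * exp (assoc_fun (MM (1 / real (Suc l))) (2 * real (Suc l) * s))"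
      using C weight_sequence.assoc_fun_nonneg[OF weight_sequence_MM, of "1 / real (Suc l)"]
      by simp
    finally show ?thesis .
  qed
  also have "\<dots> \<le> C * exp (assoc_fun (MM \<kappa>) (2 * real (Suc l) * s))"
    using C \<kappa> by (simp add: assoc_fun_antimono)
  finally show "s * exp (assoc_fun (MM lam) s) \<le> C * exp (assoc_fun (MM \<kappa>) (2 * real (Suc l) * s))" .
qed

lemma summable_imp_derivation_closed:
  assumes summable: "\<And>j. \<exists>l. summable (\<lambda>k. Lambda_weight MM j k / Lambda_weight MM l k)"
  shows "beurling_derivation_closed MM"
  unfolding beurling_derivation_closed_def
proof (intro allI impI)
  fix lam :: real
  assume lam: "lam > 0"
  obtain j :: nat where "1 / lam \<le> real j"
    using real_arch_simple by blast
  then have "1 / lam \<le> real (Suc j)"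
    by simp
  then have j: "1 / real (Suc j) \<le> lam"
    using lam by (simp add: divide_le_eq mult.commute)
  obtain l where l: "summable (\<lambda>k. Lambda_weight MM j k / Lambda_weight MM l k)"
    using summable by blast
  define \<kappa> where "\<kappa> = min lam (1 / real (Suc l))"
  have \<kappa>: "0 < \<kappa>" "\<kappa> \<le> lam" "\<kappa> \<le> 1 / real (Suc l)"
    using lam by (auto simp: \<kappa>_def)
  obtain C where C: "C \<ge> 1" and bound: "\<And>s. s > 0 \<Longrightarrow>
      s * exp (assoc_fun (MM lam) s) \<le> C * exp (assoc_fun (MM \<kappa>) (2 * real (Suc l) * s))"
    using exp_assoc_fun_le_if_summable[OF lam j l \<kappa>(1,3)] by blast
  have "MM \<kappa> (p + 1) \<le> (C * (2 * real (Suc l))) ^ (p + 1) * MM lam p" for p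
    using log_convex_weight_sequence.shift_le_if_assoc_fun_le[OF log_convex_weight_sequence_MM
        weight_sequence_MM C _ bound] \<kappa> lam by simp
  moreover have "1 \<le> C * (2 * real (Suc l))"
    using C mult_mono'[OF C, of 1 "2 * real (Suc l)"] by simp
  ultimately show "\<exists>\<kappa>>0. \<kappa> \<le> lam \<and> (\<exists>A\<ge>1. \<forall>p. MM \<kappa> (p + 1) \<le> A ^ (p + 1) * MM lam p)"
    using \<kappa> by blast
qed

end

theorem theorem5p7:
  fixes MM :: "real \<Rightarrow> nat \<Rightarrow> real"
  assumes pos: "\<And>lam p. lam > 0 \<Longrightarrow> MM lam p > 0"
    and zero: "\<And>lam. lam > 0 \<Longrightarrow> MM lam 0 = 1"
    and mono: "\<And>lam \<kappa> p. 0 < lam \<Longrightarrow> lam \<le> \<kappa> \<Longrightarrow> MM lam p \<le> MM \<kappa> p"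
    and logconv: "\<And>lam p. lam > 0 \<Longrightarrow> p \<ge> 1 \<Longrightarrow>
                    (MM lam p)\<^sup>2 \<le> MM lam (p - 1) * MM lam (p + 1)"
    and root: "\<And>lam. lam > 0 \<Longrightarrow>
                 filterlim (\<lambda>p. MM lam p powr (1 / real p)) at_top sequentially"
    and mu_mono: "\<And>lam \<kappa> p. 0 < lam \<Longrightarrow> lam \<le> \<kappa> \<Longrightarrow> p \<ge> 1 \<Longrightarrow>
                    MM lam p / MM lam (p - 1) \<le> MM \<kappa> p / MM \<kappa> (p - 1)"
  shows "nuclear_lcs (Lambda_Beur MM) (Lambda_norms MM) \<longleftrightarrow>
         (\<forall>lam>0. \<exists>\<kappa>. 0 < \<kappa> \<and> \<kappa> \<le> lam \<and>
            (\<exists>A\<ge>1. \<forall>p. MM \<kappa> (p + 1) \<le> A ^ (p + 1) * MM lam p))"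
proof -
  have "log_convex_weight_sequence (MM lam)" if "lam > 0" for lam
    using that pos zero root logconv by unfold_locales auto
  then interpret weight_matrix MM
    using mono by (rule weight_matrix.intro)
  have "nuclear_lcs (Lambda_Beur MM) (Lambda_norms MM) \<longleftrightarrow>
      (\<forall>j. \<exists>l. summable (\<lambda>k. Lambda_weight MM j k / Lambda_weight MM l k))"
    by (rule sup_koethe_space.nuclear_iff_summable[OF sup_koethe_space_Lambda])
  also have "\<dots> \<longleftrightarrow> beurling_derivation_closed MM"
    using derivation_closed_imp_summable summable_imp_derivation_closed by blast
  finally show ?thesis
    unfolding beurling_derivation_closed_def .
qed

end
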